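(* Let $A\in\mathbb{R}^{n\times n}$ be symmetric positive semidefinite, let $1\le k\le n$, and let $\mathrm{OPT}=\max_{\|y\|_2=1,\|y\|_0\le k} y^{\intercal}Ay$. Let $v_1$ be a unit-norm top eigenvector of $A$. Let $\hat x$ be defined by $\hat x_j=[v_1]_j$ if $[v_1]_j$ is one of the $k$ largest (in absolute value) entries of $v_1$, and $\hat x_j=0$ otherwise, and let $x=\hat x/\|\hat x\|_2$. Then $x^{\intercal}Ax\ge \frac{k}{n}\,\mathrm{OPT}$.
   Context: $\|y\|_0$ denotes the number of nonzero entries of $y$. *)

theory Defs
  imports "HOL-Analysis.Analysis"
begin

definition l0_norm :: "real ^ 'n \<Rightarrow> nat" where
  "l0_norm y = card {i. y $ i \<noteq> 0}"

definition sym_psd :: "real ^ 'n ^ 'n \<Rightarrow> bool" where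
  "sym_psd A \<longleftrightarrow> transpose A = A \<and> (\<forall>x. 0 \<le> x \<bullet> (A *v x))"

definition is_eigenpair :: "real ^ 'n ^ 'n \<Rightarrow> real \<Rightarrow> real ^ 'n \<Rightarrow> bool" where
  "is_eigenpair A l v \<longleftrightarrow> v \<noteq> 0 \<and> A *v v = l *\<^sub>R v"

definition top_eigenvector :: "real ^ 'n ^ 'n \<Rightarrow> real ^ 'n \<Rightarrow> bool" where
  "top_eigenvector A v \<longleftrightarrow>
     (\<exists>l. is_eigenpair A l v \<and> (\<forall>m w. is_eigenpair A m w \<longrightarrow> m \<le> l))"

definition sparse_opt :: "real ^ 'n ^ 'n \<Rightarrow> nat \<Rightarrow> real" where
  "sparse_opt A k = Sup {y \<bullet> (A *v y) | y. norm y = 1 \<and> l0_norm y \<le> k}"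

definition top_k_indices :: "real ^ 'n \<Rightarrow> nat \<Rightarrow> 'n set \<Rightarrow> bool" where
  "top_k_indices v k S \<longleftrightarrow> card S = k \<and> (\<forall>i\<in>S. \<forall>j. j \<notin> S \<longrightarrow> \<bar>v $ j\<bar> \<le> \<bar>v $ i\<bar>)"

definition truncate_vec :: "real ^ 'n \<Rightarrow> 'n set \<Rightarrow> real ^ 'n" where
  "truncate_vec v S = (\<chi> j. if j \<in> S then v $ j else 0)"

end

theory Submission
  imports Defs
begin

text \<open>Let \<open>l\<close> be the top eigenvalue and \<open>N = \<Sum>j\<in>S. v\<^sub>j\<^sup>2\<close> the mass of \<open>v\<close> on \<open>S\<close>.
  Since \<open>S\<close> holds the \<open>k\<close> largest entries, \<open>N \<ge> k/n\<close>. Because \<open>\<hat>x \<bullet> v = N\<close>, the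
  Cauchy-Schwarz inequality for the semi-inner product \<open>(u, w) \<mapsto> u \<bullet> A w\<close> gives
  \<open>\<hat>x \<bullet> A \<hat>x \<ge> l N\<^sup>2\<close>, hence \<open>x \<bullet> A x \<ge> l N \<ge> (k/n) l\<close>. Finally \<open>OPT \<le> l\<close>, as
  every unit vector has Rayleigh quotient at most \<open>l\<close>: a maximiser of the quadratic
  form on the unit sphere is itself an eigenvector.\<close>

lemma inner_matrix_vector_symmetric:
  fixes A :: "real ^ 'n ^ 'n"
  assumes "transpose A = A"
  shows "x \<bullet> (A *v y) = y \<bullet> (A *v x)"
proof -
  have "x \<bullet> (A *v y) = (transpose A *v x) \<bullet> y"
    by (simp add: dot_lmul_matrix)
  then show ?thesis
    using assms by (simp add: inner_commute)
qed

lemma quadratic_form_add_scaleR: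
  fixes A :: "real ^ 'n ^ 'n"
  assumes "transpose A = A"
  shows "(a + t *\<^sub>R b) \<bullet> (A *v (a + t *\<^sub>R b)) =
     a \<bullet> (A *v a) + 2 * t * (a \<bullet> (A *v b)) + t\<^sup>2 * (b \<bullet> (A *v b))"
  using inner_matrix_vector_symmetric[OF assms, of b a]
  by (simp add: matrix_vector_right_distrib matrix_vector_mult_scaleR inner_add_left
      inner_add_right power2_eq_square algebra_simps)

lemma nonneg_quadratic_discriminant_le:
  fixes a c q :: real
  assumes nonneg: "\<And>t. 0 \<le> a + 2 * t * c + t\<^sup>2 * q" and "0 \<le> q"
  shows "c\<^sup>2 \<le> a * q"
proof (cases "q = 0")
  case True
  have "c = 0"
  proof (rule ccontr)
    assume "c \<noteq> 0"
    have "0 \<le> a + 2 * (-(\<bar>a\<bar> + 1) / (2 * c)) * c"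
      using nonneg[of "-(\<bar>a\<bar> + 1) / (2 * c)"] True by simp
    also have "\<dots> = a - (\<bar>a\<bar> + 1)"
      using \<open>c \<noteq> 0\<close> by (simp add: field_simps)
    finally show False by simp
  qed
  then show ?thesis using True by simp
next
  case False
  then have "q > 0" using \<open>0 \<le> q\<close> by simp
  have "0 \<le> a + 2 * (-c / q) * c + (-c / q)\<^sup>2 * q" by (rule nonneg)
  also have "\<dots> = a - c\<^sup>2 / q"
    using \<open>q > 0\<close> by (simp add: field_simps power2_eq_square)
  finally show ?thesis
    using \<open>q > 0\<close> by (simp add: field_simps)
qed

lemma sym_psd_cauchy_schwarz:
  fixes A :: "real ^ 'n ^ 'n"
  assumes "sym_psd A"
  shows "(a \<bullet> (A *v b))\<^sup>2 \<le> (a \<bullet> (A *v a)) * (b \<bullet> (A *v b))"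
proof -
  have sym: "transpose A = A" and psd: "\<And>x. 0 \<le> x \<bullet> (A *v x)"
    using assms by (auto simp: sym_psd_def)
  show ?thesis
    by (rule nonneg_quadratic_discriminant_le)
      (use psd[of "a + _ *\<^sub>R b"] quadratic_form_add_scaleR[OF sym] psd in auto)
qed

text \<open>First-order condition for a maximiser \<open>y\<^sub>0\<close> of the Rayleigh quotient: perturbing
  \<open>y\<^sub>0\<close> along \<open>w\<close> keeps \<open>\<mu> (z \<bullet> z) - z \<bullet> A z\<close> nonnegative and zero at \<open>t = 0\<close>, so its
  linear coefficient \<open>\<mu> (y\<^sub>0 \<bullet> w) - w \<bullet> A y\<^sub>0\<close> vanishes for every \<open>w\<close>.\<close>
lemma rayleigh_maximiser_eigenvector:
  fixes A :: "real ^ 'n ^ 'n"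
  assumes sym: "transpose A = A" and "norm y0 = 1"
    and max: "\<And>z. z \<bullet> (A *v z) \<le> \<mu> * (z \<bullet> z)" and \<mu>: "\<mu> = y0 \<bullet> (A *v y0)"
  shows "A *v y0 = \<mu> *\<^sub>R y0"
proof -
  have y0y0: "y0 \<bullet> y0 = 1"
    using \<open>norm y0 = 1\<close> by (metis norm_eq_1)
  have stationary: "\<mu> * (y0 \<bullet> w) - w \<bullet> (A *v y0) = 0" for w
  proof -
    let ?c = "\<mu> * (y0 \<bullet> w) - y0 \<bullet> (A *v w)"
    let ?q = "\<mu> * (w \<bullet> w) - w \<bullet> (A *v w)"
    have "?c\<^sup>2 \<le> 0 * ?q"
    proof (rule nonneg_quadratic_discriminant_le)
      fix t
      have "0 \<le> \<mu> * ((y0 + t *\<^sub>R w) \<bullet> (y0 + t *\<^sub>R w)) - (y0 + t *\<^sub>R w) \<bullet> (A *v (y0 + t *\<^sub>R w))"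
        using max by simp
      also have "\<dots> = 0 + 2 * t * ?c + t\<^sup>2 * ?q"
        unfolding quadratic_form_add_scaleR[OF sym]
        by (simp add: inner_add_left inner_add_right y0y0 \<mu> inner_commute power2_eq_square
            algebra_simps)
      finally show "0 \<le> 0 + 2 * t * ?c + t\<^sup>2 * ?q" .
    next
      show "0 \<le> ?q" using max by simp
    qed
    then show ?thesis
      using inner_matrix_vector_symmetric[OF sym, of y0 w] by simp
  qed
  define r where "r = \<mu> *\<^sub>R y0 - A *v y0"
  have "r \<bullet> r = 0"
    using stationary[of r] unfolding r_def by (simp add: inner_diff_left inner_commute)
  then show ?thesis unfolding r_def by simp
qed

lemma quadratic_form_le_top_eigenvalue:
  fixes A :: "real ^ 'n ^ 'n"
  assumes sym: "transpose A = A" and top: "\<forall>m w. is_eigenpair A m w \<longrightarrow> m \<le> l"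
    and "norm y = 1"
  shows "y \<bullet> (A *v y) \<le> l"
proof -
  have "continuous_on (sphere 0 1) (\<lambda>y. y \<bullet> (A *v (y::real ^ 'n)))"
    by (intro continuous_intros linear_continuous_on matrix_vector_mul_linear)
  moreover have "sphere (0::real ^ 'n) 1 \<noteq> {}"
    using \<open>norm y = 1\<close> by auto
  ultimately obtain y0 where "y0 \<in> sphere 0 1"
    and max_sphere: "\<And>z. z \<in> sphere 0 1 \<Longrightarrow> z \<bullet> (A *v z) \<le> y0 \<bullet> (A *v y0)"
    using continuous_attains_sup[OF compact_sphere] by blast
  then have y0: "norm y0 = 1" by simp
  define \<mu> where "\<mu> = y0 \<bullet> (A *v y0)"
  have max: "z \<bullet> (A *v z) \<le> \<mu> * (z \<bullet> z)" for z
  proof (cases "z = 0")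
    case False
    have "((1 / norm z) *\<^sub>R z) \<bullet> (A *v ((1 / norm z) *\<^sub>R z)) \<le> \<mu>"
      using max_sphere[of "(1 / norm z) *\<^sub>R z"] False unfolding \<mu>_def by simp
    then have "z \<bullet> (A *v z) / (norm z)\<^sup>2 \<le> \<mu>"
      by (simp add: matrix_vector_mult_scaleR power2_eq_square)
    then have "z \<bullet> (A *v z) \<le> \<mu> * (norm z)\<^sup>2"
      using False by (simp add: field_simps)
    then show ?thesis by (simp add: power2_norm_eq_inner)
  qed simp
  have "is_eigenpair A \<mu> y0"
    using rayleigh_maximiser_eigenvector[OF sym y0 max \<mu>_def] y0
    unfolding is_eigenpair_def by auto
  then have "\<mu> \<le> l" using top by blast
  then show ?thesis
    using max_sphere[of y] \<open>norm y = 1\<close> unfolding \<mu>_def by simp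
qed

lemma sparse_opt_le_top_eigenvalue:
  fixes A :: "real ^ 'n ^ 'n"
  assumes "transpose A = A" and "\<forall>m w. is_eigenpair A m w \<longrightarrow> m \<le> l" and "1 \<le> k"
  shows "sparse_opt A k \<le> l"
  unfolding sparse_opt_def
proof (rule cSup_least)
  fix i :: 'n
  have "norm (axis i (1::real)) = 1" by simp
  moreover have "l0_norm (axis i (1::real)) \<le> k"
    using \<open>1 \<le> k\<close> by (simp add: l0_norm_def axis_def)
  ultimately
  show "{y \<bullet> (A *v y) |y. norm y = 1 \<and> l0_norm y \<le> k} \<noteq> {}" by blast
next
  fix z assume "z \<in> {y \<bullet> (A *v y) |y. norm y = 1 \<and> l0_norm y \<le> k}"
  then show "z \<le> l"
    using quadratic_form_le_top_eigenvalue[OF assms(1,2)] by blast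
qed

lemma eigenvector_inner_sq_le_quadratic_form:
  fixes A :: "real ^ 'n ^ 'n"
  assumes "sym_psd A" and "A *v v = l *\<^sub>R v" and "v \<bullet> v = 1"
  shows "l * (u \<bullet> v)\<^sup>2 \<le> u \<bullet> (A *v u)"
proof -
  have psd: "\<And>x. 0 \<le> x \<bullet> (A *v x)"
    using assms(1) by (simp add: sym_psd_def)
  have vAv: "v \<bullet> (A *v v) = l"
    using assms(2,3) by simp
  have "(l * (u \<bullet> v))\<^sup>2 \<le> (u \<bullet> (A *v u)) * l"
    using sym_psd_cauchy_schwarz[OF assms(1), of u v] unfolding vAv by (simp add: assms(2))
  then have "l * (l * (u \<bullet> v)\<^sup>2) \<le> l * (u \<bullet> (A *v u))"
    by (simp add: power2_eq_square algebra_simps)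
  moreover have "0 \<le> l"
    using psd[of v] vAv by simp
  ultimately show ?thesis
    using psd[of u] by (cases "l = 0") auto
qed

lemma card_mult_sum_le_of_dominating_subset:
  fixes f :: "'a \<Rightarrow> real"
  assumes "finite U" and "S \<subseteq> U" and dom: "\<And>i j. i \<in> S \<Longrightarrow> j \<in> U - S \<Longrightarrow> f j \<le> f i"
  shows "real (card S) * sum f U \<le> real (card U) * sum f S"
proof (cases "S = {}")
  case False
  have "finite S" using finite_subset[OF assms(2,1)] .
  define m where "m = Min (f ` S)"
  have "m \<in> f ` S"
    unfolding m_def using False \<open>finite S\<close> by (intro Min_in) auto
  then obtain i0 where "i0 \<in> S" "m = f i0" by blast
  have low: "real (card S) * m \<le> sum f S"
    using sum_mono[of S "\<lambda>_. m" f] \<open>finite S\<close> unfolding m_def by simp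
  have high: "sum f (U - S) \<le> real (card (U - S)) * m"
    using sum_mono[of "U - S" f "\<lambda>_. m"] dom[OF \<open>i0 \<in> S\<close>] \<open>m = f i0\<close> by simp
  have card_le: "card S \<le> card U"
    using assms(1,2) by (rule card_mono)
  have card_diff: "real (card (U - S)) = real (card U) - real (card S)"
    using assms(1,2) card_le by (simp add: card_Diff_subset finite_subset of_nat_diff)
  have "real (card S) * sum f U = real (card S) * sum f S + real (card S) * sum f (U - S)"
    by (simp add: sum.subset_diff[OF assms(2,1)] distrib_left)
  also have "\<dots> \<le> real (card S) * sum f S + (real (card U) - real (card S)) * (real (card S) * m)"
    using mult_left_mono[OF high, of "real (card S)"] unfolding card_diff by (simp add: algebra_simps)
  also have "\<dots> \<le> real (card S) * sum f S + (real (card U) - real (card S)) * sum f S"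
    using mult_left_mono[OF low, of "real (card U) - real (card S)"] card_le by simp
  also have "\<dots> = real (card U) * sum f S"
    by (simp add: algebra_simps)
  finally show ?thesis .
qed simp

lemma inner_truncate_vec:
  fixes v w :: "real ^ 'n"
  shows "truncate_vec v S \<bullet> w = (\<Sum>j\<in>S. v $ j * w $ j)"
proof -
  have "truncate_vec v S \<bullet> w = (\<Sum>j\<in>UNIV. if j \<in> S then v $ j * w $ j else 0)"
    unfolding truncate_vec_def inner_vec_def by (intro sum.cong) auto
  then show ?thesis
    by (simp add: sum.inter_restrict[symmetric])
qed

lemma top_k_indices_mass:
  fixes v :: "real ^ 'n"
  assumes "top_k_indices v k S" and "norm v = 1"
  shows "real k / real CARD('n) \<le> truncate_vec v S \<bullet> v"
proof -
  have "real (card S) * (\<Sum>j\<in>UNIV. (v $ j)\<^sup>2) \<le> real CARD('n) * (\<Sum>j\<in>S. (v $ j)\<^sup>2)"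
    using assms(1) unfolding top_k_indices_def
    by (intro card_mult_sum_le_of_dominating_subset) (auto simp: abs_le_square_iff)
  moreover have "(\<Sum>j\<in>UNIV. (v $ j)\<^sup>2) = 1"
    using assms(2) norm_eq_1[of v] unfolding inner_vec_def by (simp add: power2_eq_square)
  moreover have "card S = k"
    using assms(1) by (simp add: top_k_indices_def)
  ultimately show ?thesis
    by (simp add: inner_truncate_vec field_simps power2_eq_square)
qed

theorem lemma2:
  fixes A :: "real ^ 'n ^ 'n" and v :: "real ^ 'n" and k :: nat and S :: "'n set"
  assumes "sym_psd A"
    and "1 \<le> k" and "k \<le> CARD('n)"
    and "top_eigenvector A v" and "norm v = 1"
    and "top_k_indices v k S"
  shows "let xh = truncate_vec v S; x = (1 / norm xh) *\<^sub>R xh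
         in x \<bullet> (A *v x) \<ge> real k / real CARD('n) * sparse_opt A k"
proof -
  define xh where "xh = truncate_vec v S"
  define N where "N = xh \<bullet> v"
  obtain l where Av: "A *v v = l *\<^sub>R v" and top: "\<forall>m w. is_eigenpair A m w \<longrightarrow> m \<le> l"
    using assms(4) by (auto simp: top_eigenvector_def is_eigenpair_def)
  have sym: "transpose A = A" and "0 \<le> v \<bullet> (A *v v)"
    using assms(1) by (auto simp: sym_psd_def)
  with Av assms(5) have "0 \<le> l" by (simp add: norm_eq_1)
  have "xh \<bullet> xh = N"
    unfolding xh_def N_def inner_truncate_vec by (intro sum.cong) (auto simp: truncate_vec_def)
  have k_le_N: "real k / real CARD('n) \<le> N"
    unfolding N_def xh_def by (rule top_k_indices_mass[OF assms(6,5)])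
  moreover have k_pos: "0 < real k / real CARD('n)"
    using assms(2) by simp
  ultimately have "0 < N" by linarith
  have "real k / real CARD('n) * sparse_opt A k \<le> real k / real CARD('n) * l"
    using sparse_opt_le_top_eigenvalue[OF sym top assms(2)] k_pos by (intro mult_left_mono) auto
  also have "\<dots> \<le> N * l"
    using k_le_N \<open>0 \<le> l\<close> by (rule mult_right_mono)
  also have "\<dots> = l * N\<^sup>2 / N"
    using \<open>0 < N\<close> by (simp add: power2_eq_square)
  also have "\<dots> \<le> xh \<bullet> (A *v xh) / (xh \<bullet> xh)"
    using eigenvector_inner_sq_le_quadratic_form[OF assms(1) Av, of xh] assms(5) \<open>0 < N\<close>
    unfolding \<open>xh \<bullet> xh = N\<close> N_def by (simp add: norm_eq_1 divide_right_mono)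
  also have "\<dots> = ((1 / norm xh) *\<^sub>R xh) \<bullet> (A *v ((1 / norm xh) *\<^sub>R xh))"
    by (simp add: matrix_vector_mult_scaleR power2_norm_eq_inner[symmetric] power2_eq_square)
  finally show ?thesis
    unfolding Let_def xh_def by simp
qed

end
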